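(* Let $d\in\mathbb{N}$ and let $C(d)$ be a constant such that for every Radon log-concave probability measure $\mu$ on a locally convex space $E$, every $f\in\mathcal{P}^d(\mu)$ and every $\varphi\in C_b^\infty(\mathbb{R})$ with $\|\varphi\|_\infty\le1$ one has $\sigma_f^{1/d}\int\varphi'(f)\,d\mu\le C(d)\|\varphi'\|_\infty^{1-1/d}$. Let $\mu$ be a Radon log-concave probability measure on a locally convex space $E$. Then for every pair of functions $f,g\in\mathcal{P}^d(\mu)$, neither of which coincides a.e. with a constant, one has $$\|\mu\circ f^{-1}-\mu\circ g^{-1}\|_{\rm TV}\le C_d(\sigma_f,\sigma_g)\,\|\mu\circ f^{-1}-\mu\circ g^{-1}\|_{\rm FM}^{1/(1+d)},$$ where $$C_d(\sigma_f,\sigma_g)=2+2C(d)\bigl(\sigma_f^{-1/d}+\sigma_g^{-1/d}\bigr)(2\pi)^{-1/2}\int_{\mathbb{R}} e^{-t^2/2}|t|^{1/d}\,dt.$$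
   Context: Log-concave measures on $\mathbb{R}^n$: density $e^{-V}$ w.r.t. Lebesgue measure on an affine subspace, $V$ convex with values in $(-\infty,+\infty]$. A Radon probability measure on a locally convex space $E$ is log-concave if all its images under continuous linear maps to $\mathbb{R}^n$ are log-concave. $\mathcal{P}^d(\mu)$: closure in $L^2(\mu)$ of functions $p(\ell_1,\dots,\ell_n)$ with $\ell_i\in E^*$, $p$ a polynomial of degree $d$ on $\mathbb{R}^n$. $\sigma_f^2=\int(f-\int f\,d\mu)^2d\mu$. For probability measures $\nu_1,\nu_2$ on $\mathbb{R}$: $\|\nu_1-\nu_2\|_{\rm TV}=\sup\{\int\varphi\,d(\nu_1-\nu_2):\varphi\in C_b^\infty(\mathbb{R}),\|\varphi\|_\infty\le1\}$ and $\|\nu_1-\nu_2\|_{\rm FM}=\sup\{\int\varphi\,d(\nu_1-\nu_2):\varphi\in C_b^\infty(\mathbb{R}),\|\varphi\|_\infty\le1,\|\varphi'\|_\infty\le1\}$, where $C_b^\infty(\mathbb{R})$ is the space of bounded smooth functions with bounded derivatives of all orders. *)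

theory Defs
  imports "HOL-Probability.Probability"
begin

definition locally_convex_space :: "('a::{real_vector,t2_space}) itself \<Rightarrow> bool" where
  "locally_convex_space _ \<longleftrightarrow>
     continuous_on UNIV (\<lambda>(x::'a, y::'a). x + y) \<and>
     continuous_on UNIV (\<lambda>(c::real, x::'a). c *\<^sub>R x) \<and>
     (\<forall>U::'a set. open U \<and> 0 \<in> U \<longrightarrow> (\<exists>V. open V \<and> convex V \<and> 0 \<in> V \<and> V \<subseteq> U))"

definition dual_space :: "('a::{real_vector,topological_space} \<Rightarrow> real) set" where
  "dual_space = {l. linear l \<and> continuous_on UNIV l}"

definition radon_measure :: "'a::topological_space measure \<Rightarrow> bool" where
  "radon_measure \<mu> \<longleftrightarrow> sets \<mu> = sets borel \<and>
     (\<forall>B \<in> sets borel. emeasure \<mu> B = (SUP K \<in> {K. compact K \<and> K \<subseteq> B}. emeasure \<mu> K))"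

text \<open>\<open>\<real>\<^sup>n\<close> is represented by the extensional functions \<open>PiE {..<n} (\<lambda>_. UNIV)\<close>,
 with Borel sets \<open>PiM {..<n} (\<lambda>_. borel)\<close> and Lebesgue measure \<open>PiM {..<n} (\<lambda>_. lborel)\<close>.\<close>

definition Rn_borel :: "nat \<Rightarrow> (nat \<Rightarrow> real) measure" where
  "Rn_borel n = PiM {..<n} (\<lambda>_. borel)"

definition Rn_lebesgue :: "nat \<Rightarrow> (nat \<Rightarrow> real) measure" where
  "Rn_lebesgue n = PiM {..<n} (\<lambda>_. lborel)"

definition convex_fn_on :: "nat \<Rightarrow> (nat \<Rightarrow> real) set \<Rightarrow> ((nat \<Rightarrow> real) \<Rightarrow> real) \<Rightarrow> bool" where
  "convex_fn_on k D V \<longleftrightarrow> D \<subseteq> PiE {..<k} (\<lambda>_. UNIV) \<and>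
     (\<forall>x\<in>D. \<forall>y\<in>D. \<forall>t::real. 0 \<le> t \<and> t \<le> 1 \<longrightarrow>
        (let z = restrict (\<lambda>i. t * x i + (1 - t) * y i) {..<k}
         in z \<in> D \<and> V z \<le> t * V x + (1 - t) * V y))"

text \<open>A probability measure \<open>\<nu>\<close> on \<open>\<real>\<^sup>n\<close> is log-concave if it has density \<open>e\<^sup>-\<^sup>W\<close>,
 \<open>W\<close> convex with values in \<open>(-\<infinity>,+\<infinity>]\<close>, w.r.t. Lebesgue measure on an affine subspace \<open>L\<close>.
 \<open>L = a + span(u_0,...,u_{k-1})\<close> with \<open>u_j\<close> orthonormal; Lebesgue measure on \<open>L\<close> is the image
 of Lebesgue measure on \<open>\<real>\<^sup>k\<close> under the isometry \<open>y \<mapsto> a + \<Sum> y_j u_j\<close>; the density is written in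
 these coordinates: \<open>V = W \<circ> param\<close> finite exactly on the convex set \<open>D\<close>, \<open>+\<infinity>\<close> outside.\<close>
definition log_concave_Rn :: "nat \<Rightarrow> (nat \<Rightarrow> real) measure \<Rightarrow> bool" where
  "log_concave_Rn n \<nu> \<longleftrightarrow>
     (\<exists>k a u D V.
        a \<in> PiE {..<n} (\<lambda>_. UNIV) \<and>
        (\<forall>j<k. u j \<in> PiE {..<n} (\<lambda>_. UNIV)) \<and>
        (\<forall>j<k. \<forall>j'<k. (\<Sum>i<n. u j i * u j' i) = (if j = j' then 1 else 0)) \<and>
        convex_fn_on k D V \<and>
        \<nu> = distr (density (Rn_lebesgue k) (\<lambda>y. ennreal (indicator D y * exp (- V y))))
                   (Rn_borel n)
                   (\<lambda>y. restrict (\<lambda>i. a i + (\<Sum>j<k. y j * u j i)) {..<n}))"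

definition log_concave :: "'a::{real_vector,topological_space} measure \<Rightarrow> bool" where
  "log_concave \<mu> \<longleftrightarrow>
     (\<forall>n l. (\<forall>i<n. l i \<in> dual_space) \<longrightarrow>
        log_concave_Rn n (distr \<mu> (Rn_borel n) (\<lambda>x. restrict (\<lambda>i. l i x) {..<n})))"

definition poly_functionals :: "nat \<Rightarrow> ('a::{real_vector,topological_space} \<Rightarrow> real) set" where
  "poly_functionals d = {(\<lambda>x. \<Sum>\<alpha>\<in>A. c \<alpha> * (\<Prod>i<n. (l i x) ^ (\<alpha> i))) | (n::nat) l A c.
      (\<forall>i<n. l i \<in> dual_space) \<and> finite A \<and>
      (\<forall>\<alpha>\<in>A. (\<Sum>i<n. \<alpha> i) \<le> d)}"

definition Pd :: "nat \<Rightarrow> 'a::{real_vector,topological_space} measure \<Rightarrow> ('a \<Rightarrow> real) set" where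
  "Pd d \<mu> = {f. f \<in> borel_measurable \<mu> \<and> integrable \<mu> (\<lambda>x. (f x)\<^sup>2) \<and>
      (\<exists>p. (\<forall>k. p k \<in> poly_functionals d) \<and>
           (\<lambda>k. \<integral>\<^sup>+ x. ennreal ((f x - p k x)\<^sup>2) \<partial>\<mu>) \<longlonglongrightarrow> 0)}"

definition sigma :: "'a measure \<Rightarrow> ('a \<Rightarrow> real) \<Rightarrow> real" where
  "sigma \<mu> f = sqrt (\<integral>x. (f x - (\<integral>y. f y \<partial>\<mu>))\<^sup>2 \<partial>\<mu>)"

definition Cb_inf :: "(real \<Rightarrow> real) set" where
  "Cb_inf = {\<phi>. \<exists>D :: nat \<Rightarrow> real \<Rightarrow> real. D 0 = \<phi> \<and>
      (\<forall>k x. (D k has_real_derivative D (Suc k) x) (at x)) \<and>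
      (\<forall>k. bounded (range (D k)))}"

definition sup_norm :: "(real \<Rightarrow> real) \<Rightarrow> real" where
  "sup_norm \<phi> = (SUP x. \<bar>\<phi> x\<bar>)"

definition tv_dist :: "real measure \<Rightarrow> real measure \<Rightarrow> real" where
  "tv_dist \<nu>1 \<nu>2 = (SUP \<phi> \<in> {\<phi>. \<phi> \<in> Cb_inf \<and> sup_norm \<phi> \<le> 1}.
       (\<integral>x. \<phi> x \<partial>\<nu>1) - (\<integral>x. \<phi> x \<partial>\<nu>2))"

definition fm_dist :: "real measure \<Rightarrow> real measure \<Rightarrow> real" where
  "fm_dist \<nu>1 \<nu>2 = (SUP \<phi> \<in> {\<phi>. \<phi> \<in> Cb_inf \<and> sup_norm \<phi> \<le> 1 \<and> sup_norm (deriv \<phi>) \<le> 1}.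
       (\<integral>x. \<phi> x \<partial>\<nu>1) - (\<integral>x. \<phi> x \<partial>\<nu>2))"

definition Cd_const :: "nat \<Rightarrow> real \<Rightarrow> real \<Rightarrow> real \<Rightarrow> real" where
  "Cd_const d C sf sg = 2 + 2 * C * (sf powr (-1 / real d) + sg powr (-1 / real d)) *
      (2 * pi) powr (-1/2) * (\<integral>t. exp (- t\<^sup>2 / 2) * \<bar>t\<bar> powr (1 / real d) \<partial>lborel)"

end

theory Submission
  imports Defs
begin

text \<open>
  Fix a test function \<open>\<phi>\<close> with \<open>|\<phi>| \<le> 1\<close> and a scale \<open>h > 0\<close>, and let \<open>\<phi>\<^sub>h\<close> be the average of
  \<open>\<phi>\<close> over \<open>[y - h, y + h]\<close>. Then \<open>|\<phi>\<^sub>h'| \<le> 1/h\<close>, and \<open>\<phi> - \<phi>\<^sub>h = \<eta>'\<close> for a smooth \<open>\<eta>\<close> with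
  \<open>|\<eta>| \<le> h/2\<close> and \<open>|\<eta>'| \<le> 2\<close>. The contribution of \<open>\<phi>\<^sub>h\<close> to \<open>\<integral>\<phi>(f) - \<integral>\<phi>(g)\<close> is at most
  \<open>max 1 (1/h)\<close> times the Fortet--Mourier distance, while the hypothesis on \<open>C(d)\<close>, applied to
  the rescaled \<open>\<eta>\<close> for \<open>f\<close> and for \<open>g\<close>, bounds the contribution of \<open>\<eta>'\<close> by a multiple of
  \<open>h\<^sup>1\<^sup>/\<^sup>d\<close>. Optimising in \<open>h\<close> gives the exponent \<open>1/(d + 1)\<close>; the Gaussian moment in the
  constant only has to dominate \<open>8\<^sup>-\<^sup>1\<^sup>/\<^sup>d\<close>.
\<close>

lemma bounded_range_iff_abs_le: "bounded (range (\<phi>::real \<Rightarrow> real)) \<longleftrightarrow> (\<exists>B. \<forall>x. \<bar>\<phi> x\<bar> \<le> B)"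
  by (auto simp: bounded_iff)

lemma abs_le_sup_norm:
  assumes "bounded (range \<phi>)" shows "\<bar>\<phi> x\<bar> \<le> sup_norm \<phi>"
proof -
  from assms obtain B where "\<And>y. \<bar>\<phi> y\<bar> \<le> B" by (auto simp: bounded_range_iff_abs_le)
  then have "bdd_above (range (\<lambda>y. \<bar>\<phi> y\<bar>))" by (auto intro!: bdd_aboveI2)
  then show ?thesis unfolding sup_norm_def by (rule cSUP_upper[OF UNIV_I])
qed

lemma sup_norm_le:
  assumes "\<And>x. \<bar>\<phi> x\<bar> \<le> B" shows "sup_norm \<phi> \<le> B"
  unfolding sup_norm_def by (rule cSUP_least) (use assms in auto)

lemma sup_norm_nonneg:
  assumes "bounded (range \<phi>)" shows "0 \<le> sup_norm \<phi>"
  using abs_le_sup_norm[OF assms, of 0] by linarith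

lemma Cb_infI:
  assumes "D 0 = \<phi>" "\<And>k x. (D k has_real_derivative D (Suc k) x) (at x)"
    "\<And>k. \<exists>B. \<forall>x. \<bar>D k x\<bar> \<le> B"
  shows "\<phi> \<in> Cb_inf"
  unfolding Cb_inf_def using assms by (auto simp: bounded_range_iff_abs_le)

lemma Cb_infE:
  assumes "\<phi> \<in> Cb_inf"
  obtains D where "D 0 = \<phi>" "\<And>k x. (D k has_real_derivative D (Suc k) x) (at x)"
    "\<And>k. \<exists>B. \<forall>x. \<bar>D k x\<bar> \<le> B"
  using assms unfolding Cb_inf_def by (auto simp: bounded_range_iff_abs_le)

lemma Cb_inf_has_real_derivative:
  assumes "\<phi> \<in> Cb_inf" shows "(\<phi> has_real_derivative deriv \<phi> x) (at x)"
  using assms by (elim Cb_infE) (metis DERIV_imp_deriv)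

lemma Cb_inf_bounded: "\<phi> \<in> Cb_inf \<Longrightarrow> bounded (range \<phi>)"
  unfolding Cb_inf_def by auto

lemma Cb_inf_bounded_deriv:
  assumes "\<phi> \<in> Cb_inf" shows "bounded (range (deriv \<phi>))"
proof -
  obtain D where D: "D 0 = \<phi>" "\<And>k x. (D k has_real_derivative D (Suc k) x) (at x)"
    "\<And>k. \<exists>B. \<forall>x. \<bar>D k x\<bar> \<le> B"
    using Cb_infE[OF assms] by metis
  have "deriv \<phi> = D 1"
    using D(2)[of 0] D(1) by (auto intro!: DERIV_imp_deriv)
  then show ?thesis using D(3)[of 1] by (simp add: bounded_range_iff_abs_le)
qed

lemma Cb_inf_borel_measurable: "\<phi> \<in> Cb_inf \<Longrightarrow> \<phi> \<in> borel_measurable borel"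
  by (rule borel_measurable_continuous_onI)
    (meson Cb_inf_has_real_derivative DERIV_isCont continuous_at_imp_continuous_on)

lemma Cb_inf_zero: "(\<lambda>x. 0) \<in> Cb_inf"
  by (rule Cb_infI[where D="\<lambda>k x. 0"]) auto

lemma Cb_inf_sin: "sin \<in> Cb_inf"
proof (rule Cb_infI[where D="\<lambda>k x. sin (x + real k * (pi / 2))"])
  show "((\<lambda>x. sin (x + real k * (pi / 2))) has_real_derivative sin (x + real (Suc k) * (pi / 2))) (at x)"
    for k x
  proof -
    have "x + real (Suc k) * (pi / 2) = (x + real k * (pi / 2)) + pi / 2"
      by (simp add: algebra_simps)
    moreover have "((\<lambda>x. sin (x + real k * (pi / 2))) has_real_derivative cos (x + real k * (pi / 2))) (at x)"
      by (auto intro!: derivative_eq_intros)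
    ultimately show ?thesis by (simp only:) (simp add: sin_add)
  qed
  show "\<exists>B. \<forall>x. \<bar>sin (x + real k * (pi / 2))\<bar> \<le> B" for k
    by (intro exI[of _ 1]) simp
qed simp

lemma Cb_inf_cmult:
  assumes "\<phi> \<in> Cb_inf" shows "(\<lambda>x. c * \<phi> x) \<in> Cb_inf"
proof -
  obtain D where D: "D 0 = \<phi>" "\<And>k x. (D k has_real_derivative D (Suc k) x) (at x)"
    "\<And>k. \<exists>B. \<forall>x. \<bar>D k x\<bar> \<le> B"
    using Cb_infE[OF assms] by metis
  have "\<exists>B. \<forall>x. \<bar>c * D k x\<bar> \<le> B" for k
  proof -
    obtain B where "\<forall>x. \<bar>D k x\<bar> \<le> B" using D(3) by blast
    then have "\<forall>x. \<bar>c * D k x\<bar> \<le> \<bar>c\<bar> * B" by (auto simp: abs_mult intro: mult_left_mono)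
    then show ?thesis by blast
  qed
  then show ?thesis
    by (intro Cb_infI[where D="\<lambda>k x. c * D k x"] DERIV_cmult D(2)) (use D(1) in auto)
qed

lemma deriv_cmult_Cb_inf:
  assumes "\<phi> \<in> Cb_inf" shows "deriv (\<lambda>x. c * \<phi> x) = (\<lambda>x. c * deriv \<phi> x)"
  using DERIV_imp_deriv[OF DERIV_cmult[OF Cb_inf_has_real_derivative[OF assms]]] by auto

lemma Cb_inf_diff:
  assumes "\<phi> \<in> Cb_inf" "\<psi> \<in> Cb_inf" shows "(\<lambda>x. \<phi> x - \<psi> x) \<in> Cb_inf"
proof -
  obtain D where D: "D 0 = \<phi>" "\<And>k x. (D k has_real_derivative D (Suc k) x) (at x)"
    "\<And>k. \<exists>B. \<forall>x. \<bar>D k x\<bar> \<le> B"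
    using Cb_infE[OF assms(1)] by metis
  obtain E where E: "E 0 = \<psi>" "\<And>k x. (E k has_real_derivative E (Suc k) x) (at x)"
    "\<And>k. \<exists>B. \<forall>x. \<bar>E k x\<bar> \<le> B"
    using Cb_infE[OF assms(2)] by metis
  have "\<exists>B. \<forall>x. \<bar>D k x - E k x\<bar> \<le> B" for k
  proof -
    obtain B1 B2 where "\<forall>x. \<bar>D k x\<bar> \<le> B1" "\<forall>x. \<bar>E k x\<bar> \<le> B2" using D(3) E(3) by blast
    then have "\<forall>x. \<bar>D k x - E k x\<bar> \<le> B1 + B2" by (auto intro: order_trans[OF abs_triangle_ineq4 add_mono])
    then show ?thesis by blast
  qed
  then show ?thesis
    by (intro Cb_infI[where D="\<lambda>k x. D k x - E k x"] DERIV_diff D(2) E(2)) (use D(1) E(1) in auto)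
qed

lemma Cb_inf_shift:
  assumes "\<phi> \<in> Cb_inf" shows "(\<lambda>x. \<phi> (x + a)) \<in> Cb_inf"
proof -
  obtain D where D: "D 0 = \<phi>" "\<And>k x. (D k has_real_derivative D (Suc k) x) (at x)"
    "\<And>k. \<exists>B. \<forall>x. \<bar>D k x\<bar> \<le> B"
    using Cb_infE[OF assms] by metis
  have "((\<lambda>x. x + a) has_real_derivative 1) (at x)" for x
    by (auto intro!: derivative_eq_intros)
  then have "((\<lambda>x. D k (x + a)) has_real_derivative D (Suc k) (x + a)) (at x)" for k x
    using DERIV_chain2[OF D(2)] by fastforce
  moreover have "\<exists>B. \<forall>x. \<bar>D k (x + a)\<bar> \<le> B" for k
    using D(3)[of k] by blast
  ultimately show ?thesis
    by (intro Cb_infI[where D="\<lambda>k x. D k (x + a)"]) (use D(1) in auto)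
qed

lemma Cb_inf_antiderivative:
  assumes "\<theta> \<in> Cb_inf" "\<And>x. (\<psi> has_real_derivative \<theta> x) (at x)" "bounded (range \<psi>)"
  shows "\<psi> \<in> Cb_inf"
proof -
  obtain D where D: "D 0 = \<theta>" "\<And>k x. (D k has_real_derivative D (Suc k) x) (at x)"
    "\<And>k. \<exists>B. \<forall>x. \<bar>D k x\<bar> \<le> B"
    using Cb_infE[OF assms(1)] by metis
  show ?thesis
    by (rule Cb_infI[where D="\<lambda>k. case k of 0 \<Rightarrow> \<psi> | Suc j \<Rightarrow> D j"])
      (use assms(2,3) D in \<open>auto split: nat.split simp: bounded_range_iff_abs_le\<close>)
qed

lemma exists_antiderivative:
  fixes \<phi> :: "real \<Rightarrow> real"
  assumes "\<And>x. isCont \<phi> x"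
  obtains \<Phi> where "\<And>x. (\<Phi> has_real_derivative \<phi> x) (at x)"
  using einterval_antiderivative[of "-\<infinity>" "\<infinity>" \<phi>] assms
  by (auto simp: has_real_derivative_iff_has_vector_derivative)

lemma abs_diff_le_of_deriv_bound:
  fixes F :: "real \<Rightarrow> real"
  assumes "\<And>x. (F has_real_derivative F' x) (at x)" "\<And>x. \<bar>F' x\<bar> \<le> L"
  shows "\<bar>F a - F b\<bar> \<le> L * \<bar>a - b\<bar>"
  using field_differentiable_bound[of UNIV F F' L a b] assms by auto

subsection \<open>Symmetric difference quotients\<close>

definition sym_diff_quot :: "real \<Rightarrow> (real \<Rightarrow> real) \<Rightarrow> real \<Rightarrow> real" where
  "sym_diff_quot h F y = (F (y + h) - F (y - h)) / (2 * h)"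

lemma has_real_derivative_sym_diff_quot:
  assumes "\<And>x. (F has_real_derivative F' x) (at x)"
  shows "(sym_diff_quot h F has_real_derivative sym_diff_quot h F' y) (at y)"
proof -
  have "((\<lambda>y. y + h) has_real_derivative 1) (at y)" "((\<lambda>y. y - h) has_real_derivative 1) (at y)"
    by (auto intro!: derivative_eq_intros)
  then have "((\<lambda>y. F (y + h)) has_real_derivative F' (y + h)) (at y)"
    "((\<lambda>y. F (y - h)) has_real_derivative F' (y - h)) (at y)"
    using DERIV_chain2[OF assms] by fastforce+
  then show ?thesis
    unfolding sym_diff_quot_def by (intro DERIV_cdivide DERIV_diff)
qed

lemma Cb_inf_sym_diff_quot:
  assumes "\<phi> \<in> Cb_inf" shows "sym_diff_quot h \<phi> \<in> Cb_inf"
proof -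
  have "sym_diff_quot h \<phi> = (\<lambda>y. (1 / (2 * h)) * (\<phi> (y + h) - \<phi> (y + - h)))"
    by (auto simp: sym_diff_quot_def)
  then show ?thesis
    by (simp only:) (intro Cb_inf_cmult Cb_inf_diff Cb_inf_shift assms)
qed

lemma abs_sym_diff_quot_le_deriv_bound:
  assumes "\<And>x. (F has_real_derivative F' x) (at x)" "\<And>x. \<bar>F' x\<bar> \<le> L" "0 < h"
  shows "\<bar>sym_diff_quot h F y\<bar> \<le> L"
proof -
  have "\<bar>F (y + h) - F (y - h)\<bar> \<le> L * (2 * h)"
    using abs_diff_le_of_deriv_bound[OF assms(1,2), of "y + h" "y - h"] assms(3) by simp
  then show ?thesis
    using assms(3) by (simp add: sym_diff_quot_def abs_div divide_le_eq)
qed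

lemma abs_sym_diff_quot_le:
  assumes "\<And>x. \<bar>F x\<bar> \<le> B" "0 < h"
  shows "\<bar>sym_diff_quot h F y\<bar> \<le> B / h"
proof -
  have "\<bar>F (y + h) - F (y - h)\<bar> \<le> 2 * B"
    using assms(1)[of "y + h"] assms(1)[of "y - h"] by linarith
  then show ?thesis
    using assms(2) by (simp add: sym_diff_quot_def abs_div field_simps)
qed

text \<open>Second-order accuracy of the symmetric difference quotient: with \<open>G(s) = \<Psi>(y + s) -
  \<Psi>(y - s) - 2 s \<Phi>(y)\<close> one has \<open>|G'(s)| \<le> 2 L s\<close>, so \<open>G(s) \<mp> L s\<^sup>2\<close> are monotone.\<close>
lemma sym_diff_quot_error:
  fixes \<Phi> \<Psi> \<phi> :: "real \<Rightarrow> real"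
  assumes \<Phi>: "\<And>x. (\<Phi> has_real_derivative \<phi> x) (at x)"
    and \<Psi>: "\<And>x. (\<Psi> has_real_derivative \<Phi> x) (at x)"
    and L: "\<And>x. \<bar>\<phi> x\<bar> \<le> L" and h: "0 < h"
  shows "\<bar>\<Phi> y - sym_diff_quot h \<Psi> y\<bar> \<le> L * h / 2"
proof -
  define G where "G s = \<Psi> (y + s) - \<Psi> (y - s) - 2 * s * \<Phi> y" for s
  have G': "(G has_real_derivative \<Phi> (y + s) + \<Phi> (y - s) - 2 * \<Phi> y) (at s)" for s
  proof -
    have "((\<lambda>s. y + s) has_real_derivative 1) (at s)" "((\<lambda>s. y - s) has_real_derivative -1) (at s)"
      by (auto intro!: derivative_eq_intros)
    then have "((\<lambda>s. \<Psi> (y + s)) has_real_derivative \<Phi> (y + s)) (at s)"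
      "((\<lambda>s. \<Psi> (y - s)) has_real_derivative \<Phi> (y - s) * -1) (at s)"
      using DERIV_chain2[OF \<Psi>] by fastforce+
    from DERIV_diff[OF DERIV_diff[OF this] DERIV_cmult[OF DERIV_cmult_right[OF DERIV_ident], of 2 "\<Phi> y"]]
    show ?thesis unfolding G_def by (simp add: algebra_simps)
  qed
  have G'_bound: "\<bar>\<Phi> (y + s) + \<Phi> (y - s) - 2 * \<Phi> y\<bar> \<le> 2 * L * \<bar>s\<bar>" for s
    using abs_diff_le_of_deriv_bound[OF \<Phi> L, of "y + s" y]
      abs_diff_le_of_deriv_bound[OF \<Phi> L, of "y - s" y] by simp
  have L0: "0 \<le> L" using L[of 0] by linarith
  have "G h - L * h\<^sup>2 \<le> G 0 - L * 0\<^sup>2"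
  proof (rule DERIV_nonpos_imp_nonincreasing[where f="\<lambda>s. G s - L * s\<^sup>2"])
    fix s assume "0 \<le> s" "s \<le> h"
    then show "\<exists>y. ((\<lambda>s. G s - L * s\<^sup>2) has_real_derivative y) (at s) \<and> y \<le> 0"
      using G'_bound[of s] DERIV_diff[OF G'[of s] DERIV_cmult[OF DERIV_pow[of 2 s], where c=L]]
      by (intro exI[of _ "\<Phi> (y + s) + \<Phi> (y - s) - 2 * \<Phi> y - L * (real 2 * s ^ (2 - 1))"]) auto
  qed (use h in auto)
  moreover have "G 0 + L * 0\<^sup>2 \<le> G h + L * h\<^sup>2"
  proof (rule DERIV_nonneg_imp_nondecreasing[where f="\<lambda>s. G s + L * s\<^sup>2"])
    fix s assume "0 \<le> s" "s \<le> h"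
    then show "\<exists>y. ((\<lambda>s. G s + L * s\<^sup>2) has_real_derivative y) (at s) \<and> 0 \<le> y"
      using G'_bound[of s] DERIV_add[OF G'[of s] DERIV_cmult[OF DERIV_pow[of 2 s], where c=L]]
      by (intro exI[of _ "\<Phi> (y + s) + \<Phi> (y - s) - 2 * \<Phi> y + L * (real 2 * s ^ (2 - 1))"]) auto
  qed (use h in auto)
  moreover have "G 0 = 0" by (simp add: G_def)
  ultimately have "\<bar>G h\<bar> \<le> L * h\<^sup>2" by simp
  moreover have "\<Phi> y - sym_diff_quot h \<Psi> y = - G h / (2 * h)"
    using h by (simp add: G_def sym_diff_quot_def field_simps)
  ultimately show ?thesis
    using h by (simp add: abs_div divide_le_eq power2_eq_square)
qed

text \<open>\<open>\<phi>\<^sub>h\<close> is the average of \<open>\<phi>\<close> over \<open>[y - h, y + h]\<close>, and \<open>\<eta> = \<Phi> - \<Psi>\<^sub>h\<close> for iterated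
  antiderivatives \<open>\<Psi>' = \<Phi>\<close>, \<open>\<Phi>' = \<phi>\<close>.\<close>
lemma Cb_inf_smoothing_decomposition:
  assumes \<phi>: "\<phi> \<in> Cb_inf" "\<And>x. \<bar>\<phi> x\<bar> \<le> 1" and h: "0 < h"
  obtains \<phi>\<^sub>h \<eta> where "\<phi>\<^sub>h \<in> Cb_inf" "\<And>x. \<bar>\<phi>\<^sub>h x\<bar> \<le> 1" "\<And>x. \<bar>deriv \<phi>\<^sub>h x\<bar> \<le> 1 / h"
    "\<eta> \<in> Cb_inf" "\<And>x. \<bar>\<eta> x\<bar> \<le> h / 2" "\<And>x. deriv \<eta> x = \<phi> x - \<phi>\<^sub>h x"
    "\<And>x. \<bar>deriv \<eta> x\<bar> \<le> 2"
proof -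
  obtain \<Phi> where \<Phi>: "\<And>x. (\<Phi> has_real_derivative \<phi> x) (at x)"
    using exists_antiderivative DERIV_isCont Cb_inf_has_real_derivative[OF \<phi>(1)] by metis
  obtain \<Psi> where \<Psi>: "\<And>x. (\<Psi> has_real_derivative \<Phi> x) (at x)"
    using exists_antiderivative DERIV_isCont \<Phi> by metis
  define \<phi>\<^sub>h where "\<phi>\<^sub>h = sym_diff_quot h \<Phi>"
  define \<eta> where "\<eta> y = \<Phi> y - sym_diff_quot h \<Psi> y" for y
  have \<phi>\<^sub>h': "(\<phi>\<^sub>h has_real_derivative sym_diff_quot h \<phi> x) (at x)" for x
    unfolding \<phi>\<^sub>h_def by (rule has_real_derivative_sym_diff_quot[OF \<Phi>])
  have \<phi>\<^sub>h_bound: "\<bar>\<phi>\<^sub>h x\<bar> \<le> 1" for x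
    unfolding \<phi>\<^sub>h_def by (rule abs_sym_diff_quot_le_deriv_bound[OF \<Phi> \<phi>(2) h])
  have \<phi>\<^sub>h_Cb: "\<phi>\<^sub>h \<in> Cb_inf"
    using \<phi>\<^sub>h_bound by (intro Cb_inf_antiderivative[OF Cb_inf_sym_diff_quot[OF \<phi>(1)] \<phi>\<^sub>h'])
      (auto simp: bounded_range_iff_abs_le intro!: exI[of _ 1])
  have deriv_\<phi>\<^sub>h: "deriv \<phi>\<^sub>h x = sym_diff_quot h \<phi> x" for x
    by (rule DERIV_imp_deriv[OF \<phi>\<^sub>h'])
  have \<eta>': "(\<eta> has_real_derivative \<phi> x - \<phi>\<^sub>h x) (at x)" for x
    unfolding \<eta>_def \<phi>\<^sub>h_def by (intro DERIV_diff \<Phi> has_real_derivative_sym_diff_quot[OF \<Psi>])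
  have \<eta>_bound: "\<bar>\<eta> x\<bar> \<le> h / 2" for x
    using sym_diff_quot_error[OF \<Phi> \<Psi> \<phi>(2) h] by (simp add: \<eta>_def)
  have \<eta>_Cb: "\<eta> \<in> Cb_inf"
    using \<eta>_bound by (intro Cb_inf_antiderivative[OF Cb_inf_diff[OF \<phi>(1) \<phi>\<^sub>h_Cb] \<eta>'])
      (auto simp: bounded_range_iff_abs_le intro!: exI[of _ "h / 2"])
  have deriv_\<eta>: "deriv \<eta> x = \<phi> x - \<phi>\<^sub>h x" for x
    by (rule DERIV_imp_deriv[OF \<eta>'])
  show ?thesis
  proof (rule that[OF \<phi>\<^sub>h_Cb \<phi>\<^sub>h_bound _ \<eta>_Cb \<eta>_bound deriv_\<eta>])
    show "\<bar>deriv \<phi>\<^sub>h x\<bar> \<le> 1 / h" for x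
      unfolding deriv_\<phi>\<^sub>h by (rule abs_sym_diff_quot_le[OF \<phi>(2) h])
    show "\<bar>deriv \<eta> x\<bar> \<le> 2" for x
      unfolding deriv_\<eta> using \<phi>(2)[of x] \<phi>\<^sub>h_bound[of x] by linarith
  qed
qed

lemma integrable_Cb_inf_comp:
  assumes "prob_space M" "f \<in> borel_measurable M" "\<psi> \<in> Cb_inf"
  shows "integrable M (\<lambda>x. \<psi> (f x))"
proof -
  interpret prob_space M by fact
  obtain B where "\<And>y. \<bar>\<psi> y\<bar> \<le> B"
    using Cb_inf_bounded[OF assms(3)] by (auto simp: bounded_range_iff_abs_le)
  then show ?thesis
    using measurable_compose[OF assms(2) Cb_inf_borel_measurable[OF assms(3)]]
    by (intro integrable_const_bound[where B=B]) auto
qed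

lemma abs_integral_Cb_inf_comp_le:
  assumes "prob_space M" "f \<in> borel_measurable M" "\<psi> \<in> Cb_inf"
  shows "\<bar>\<integral>x. \<psi> (f x) \<partial>M\<bar> \<le> sup_norm \<psi>"
proof -
  interpret prob_space M by fact
  have "\<bar>\<integral>x. \<psi> (f x) \<partial>M\<bar> \<le> (\<integral>x. \<bar>\<psi> (f x)\<bar> \<partial>M)"
    by (intro integral_abs_bound)
  also have "\<dots> \<le> sup_norm \<psi>"
    using abs_le_sup_norm[OF Cb_inf_bounded[OF assms(3)]] integrable_Cb_inf_comp[OF assms]
    by (intro integral_le_const) auto
  finally show ?thesis .
qed

lemma integral_distr_Cb_inf:
  assumes "f \<in> borel_measurable M" "\<psi> \<in> Cb_inf"
  shows "(\<integral>y. \<psi> y \<partial>distr M borel f) = (\<integral>x. \<psi> (f x) \<partial>M)"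
  by (rule integral_distr[OF assms(1) Cb_inf_borel_measurable[OF assms(2)]])

lemma integral_diff_le_fm_dist:
  assumes M: "prob_space M" and f: "f \<in> borel_measurable M" and g: "g \<in> borel_measurable M"
    and \<psi>: "\<psi> \<in> Cb_inf" "\<And>x. \<bar>\<psi> x\<bar> \<le> m" "\<And>x. \<bar>deriv \<psi> x\<bar> \<le> m" and m: "0 < m"
  shows "(\<integral>x. \<psi> (f x) \<partial>M) - (\<integral>x. \<psi> (g x) \<partial>M) \<le> m * fm_dist (distr M borel f) (distr M borel g)"
proof -
  define T where "T \<phi> = (\<integral>y. \<phi> y \<partial>distr M borel f) - (\<integral>y. \<phi> y \<partial>distr M borel g)"
    for \<phi> :: "real \<Rightarrow> real"
  define S where "S = {\<phi>. \<phi> \<in> Cb_inf \<and> sup_norm \<phi> \<le> 1 \<and> sup_norm (deriv \<phi>) \<le> 1}"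
  have "T \<phi> \<le> 2" if "\<phi> \<in> S" for \<phi>
  proof -
    have \<phi>: "\<phi> \<in> Cb_inf" "sup_norm \<phi> \<le> 1" using that by (auto simp: S_def)
    then have "T \<phi> = (\<integral>x. \<phi> (f x) \<partial>M) - (\<integral>x. \<phi> (g x) \<partial>M)"
      by (simp add: T_def integral_distr_Cb_inf[OF f] integral_distr_Cb_inf[OF g])
    then show ?thesis
      using abs_integral_Cb_inf_comp_le[OF M f \<phi>(1)] abs_integral_Cb_inf_comp_le[OF M g \<phi>(1)] \<phi>(2)
      by linarith
  qed
  then have bdd: "bdd_above (T ` S)" by (auto intro!: bdd_aboveI2)
  define \<psi>' where "\<psi>' x = (1 / m) * \<psi> x" for x
  have "\<psi>' \<in> Cb_inf" unfolding \<psi>'_def by (rule Cb_inf_cmult[OF \<psi>(1)])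
  moreover have "deriv \<psi>' = (\<lambda>x. (1 / m) * deriv \<psi> x)"
    unfolding \<psi>'_def by (rule deriv_cmult_Cb_inf[OF \<psi>(1)])
  ultimately have "\<psi>' \<in> S"
    using \<psi> m unfolding S_def by (auto simp: \<psi>'_def abs_mult divide_le_eq intro!: sup_norm_le)
  then have "T \<psi>' \<le> fm_dist (distr M borel f) (distr M borel g)"
    unfolding fm_dist_def S_def[symmetric] T_def[symmetric] by (rule cSUP_upper[OF _ bdd])
  moreover have "T \<psi>' = (1 / m) * ((\<integral>x. \<psi> (f x) \<partial>M) - (\<integral>x. \<psi> (g x) \<partial>M))"
    using \<open>\<psi>' \<in> Cb_inf\<close> unfolding T_def
    by (simp add: integral_distr_Cb_inf[OF f] integral_distr_Cb_inf[OF g] \<psi>'_def right_diff_distrib)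
  ultimately show ?thesis using m by (simp add: field_simps)
qed

lemma fm_dist_nonneg:
  assumes "prob_space M" "f \<in> borel_measurable M" "g \<in> borel_measurable M"
  shows "0 \<le> fm_dist (distr M borel f) (distr M borel g)"
  using integral_diff_le_fm_dist[OF assms Cb_inf_zero, of 1] by simp

lemma tv_dist_le:
  assumes f: "f \<in> borel_measurable M" and g: "g \<in> borel_measurable M"
    and B: "\<And>\<psi>. \<psi> \<in> Cb_inf \<Longrightarrow> sup_norm \<psi> \<le> 1 \<Longrightarrow> (\<integral>x. \<psi> (f x) \<partial>M) - (\<integral>x. \<psi> (g x) \<partial>M) \<le> B"
  shows "tv_dist (distr M borel f) (distr M borel g) \<le> B"
  unfolding tv_dist_def
proof (rule cSUP_least)
  have "sup_norm (\<lambda>x::real. 0::real) \<le> 1" by (rule sup_norm_le) simp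
  then show "{\<phi>. \<phi> \<in> Cb_inf \<and> sup_norm \<phi> \<le> 1} \<noteq> {}" using Cb_inf_zero by blast
qed (use B in \<open>auto simp: integral_distr_Cb_inf[OF f] integral_distr_Cb_inf[OF g]\<close>)

lemma Pd_memD: "f \<in> Pd d M \<Longrightarrow> f \<in> borel_measurable M \<and> integrable M (\<lambda>x. (f x)\<^sup>2)"
  unfolding Pd_def by blast

lemma sigma_pos:
  assumes "prob_space M" "f \<in> borel_measurable M" "integrable M (\<lambda>x. (f x)\<^sup>2)"
    "\<not> (\<exists>c. AE x in M. f x = c)"
  shows "0 < sigma M f"
proof -
  interpret prob_space M by fact
  define c where "c = (\<integral>y. f y \<partial>M)"
  have "integrable M f" by (rule square_integrable_imp_integrable[OF assms(2,3)])
  then have int: "integrable M (\<lambda>x. (f x - c)\<^sup>2)"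
    using assms(3) by (simp add: power2_diff)
  have "(\<integral>x. (f x - c)\<^sup>2 \<partial>M) \<noteq> 0"
  proof
    assume "(\<integral>x. (f x - c)\<^sup>2 \<partial>M) = 0"
    then have "AE x in M. f x = c"
      using integral_nonneg_eq_0_iff_AE[OF int] by simp
    then show False using assms(4) by blast
  qed
  moreover have "0 \<le> (\<integral>x. (f x - c)\<^sup>2 \<partial>M)" by simp
  ultimately have "0 < (\<integral>x. (f x - c)\<^sup>2 \<partial>M)" by linarith
  then show ?thesis unfolding sigma_def c_def[symmetric] by simp
qed

text \<open>The hypothesis on \<open>C(d)\<close> for a single function \<open>f\<close> reads
  \<open>derivative_test_bound \<mu> f \<sigma>\<^sub>f (1/d) C(d)\<close>.\<close>
definition derivative_test_bound :: "'a measure \<Rightarrow> ('a \<Rightarrow> real) \<Rightarrow> real \<Rightarrow> real \<Rightarrow> real \<Rightarrow> bool" where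
  "derivative_test_bound M f s q C \<longleftrightarrow> (\<forall>\<psi>\<in>Cb_inf. sup_norm \<psi> \<le> 1 \<longrightarrow>
      s powr q * (\<integral>x. deriv \<psi> (f x) \<partial>M) \<le> C * sup_norm (deriv \<psi>) powr (1 - q))"

lemma derivative_test_bound_imp_nonneg:
  assumes H: "derivative_test_bound M f s q C" and s: "0 < s"
  shows "0 \<le> C"
proof (rule ccontr)
  assume "\<not> 0 \<le> C"
  have "s powr q * (\<integral>x. c * cos (f x) \<partial>M) < 0" if c: "\<bar>c\<bar> = 1" for c
  proof -
    have "sup_norm (\<lambda>x. c * sin x) \<le> 1"
      using c by (intro sup_norm_le) (simp add: abs_mult)
    then have "s powr q * (\<integral>x. deriv (\<lambda>x. c * sin x) (f x) \<partial>M)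
        \<le> C * sup_norm (deriv (\<lambda>x. c * sin x)) powr (1 - q)"
      using H Cb_inf_cmult[OF Cb_inf_sin, of c] unfolding derivative_test_bound_def by blast
    moreover have "deriv (\<lambda>x. c * sin x) = (\<lambda>x. c * cos x)"
      by (intro ext DERIV_imp_deriv DERIV_cmult DERIV_sin)
    ultimately have "s powr q * (\<integral>x. c * cos (f x) \<partial>M) \<le> C * sup_norm (\<lambda>x. c * cos x) powr (1 - q)"
      by simp
    also have "\<dots> < 0"
    proof (rule mult_neg_pos)
      have "bounded (range (\<lambda>x. c * cos x))"
        using c by (auto simp: bounded_range_iff_abs_le abs_mult intro!: exI[of _ 1])
      from abs_le_sup_norm[OF this, of 0] c show "0 < sup_norm (\<lambda>x. c * cos x) powr (1 - q)"
        by simp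
    qed (use \<open>\<not> 0 \<le> C\<close> in simp)
    finally show ?thesis .
  qed
  from this[of 1] this[of "-1"] s show False by simp
qed

lemma abs_integral_deriv_le_derivative_test_bound:
  assumes H: "derivative_test_bound M f s q C" and C: "0 \<le> C" and s: "0 < s" and q: "q \<le> 1"
    and \<psi>: "\<psi> \<in> Cb_inf" "\<And>x. \<bar>\<psi> x\<bar> \<le> A" "\<And>x. \<bar>deriv \<psi> x\<bar> \<le> B" and A: "0 < A"
  shows "\<bar>\<integral>x. deriv \<psi> (f x) \<partial>M\<bar> \<le> C * A * (B / A) powr (1 - q) / s powr q"
proof -
  have "c * (\<integral>x. deriv \<psi> (f x) \<partial>M) \<le> C * A * (B / A) powr (1 - q) / s powr q" if "\<bar>c\<bar> = 1" for c
  proof -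
    define \<psi>' where "\<psi>' x = (c / A) * \<psi> x" for x
    have \<psi>'_Cb: "\<psi>' \<in> Cb_inf" unfolding \<psi>'_def by (rule Cb_inf_cmult[OF \<psi>(1)])
    have deriv_\<psi>': "deriv \<psi>' = (\<lambda>x. (c / A) * deriv \<psi> x)"
      unfolding \<psi>'_def by (rule deriv_cmult_Cb_inf[OF \<psi>(1)])
    have "sup_norm \<psi>' \<le> 1"
      using \<psi>(2) A that by (intro sup_norm_le) (simp add: \<psi>'_def abs_mult divide_le_eq)
    then have "s powr q * (\<integral>x. deriv \<psi>' (f x) \<partial>M) \<le> C * sup_norm (deriv \<psi>') powr (1 - q)"
      using H \<psi>'_Cb unfolding derivative_test_bound_def by blast
    also have "\<dots> \<le> C * (B / A) powr (1 - q)"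
    proof (intro mult_left_mono powr_mono2 C sup_norm_nonneg Cb_inf_bounded_deriv \<psi>'_Cb)
      show "sup_norm (deriv \<psi>') \<le> B / A"
        using \<psi>(3) A that by (intro sup_norm_le) (simp add: deriv_\<psi>' abs_mult field_simps)
    qed (use q in auto)
    finally have "s powr q * ((c / A) * (\<integral>x. deriv \<psi> (f x) \<partial>M)) \<le> C * (B / A) powr (1 - q)"
      by (simp add: deriv_\<psi>')
    then show ?thesis
      using s A by (simp add: field_simps)
  qed
  from this[of 1] this[of "-1"] show ?thesis by linarith
qed

lemma rescaled_bound_eq:
  fixes h s C q :: real assumes "0 < h" "0 < s"
  shows "C * (h / 2) * (2 / (h / 2)) powr (1 - q) / s powr q = 2 * C * s powr (- q) * (h / 4) powr q"
proof -
  have "(4 / h) powr (1 - q) = (4 / h) * (h / 4) powr q"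
    using assms by (simp add: powr_diff powr_divide field_simps)
  moreover have "2 / (h / 2) = 4 / h" by simp
  ultimately show ?thesis
    using assms by (simp add: powr_minus_divide field_simps)
qed

subsection \<open>Comparison of total variation and Fortet--Mourier distances\<close>

lemma smoothed_difference_bound:
  assumes M: "prob_space M" and f: "f \<in> borel_measurable M" and g: "g \<in> borel_measurable M"
    and Hf: "derivative_test_bound M f sf q C" and Hg: "derivative_test_bound M g sg q C"
    and C: "0 \<le> C" and sf: "0 < sf" and sg: "0 < sg" and q: "q \<le> 1"
    and \<phi>: "\<phi> \<in> Cb_inf" "sup_norm \<phi> \<le> 1" and h: "0 < h"
  shows "(\<integral>x. \<phi> (f x) \<partial>M) - (\<integral>x. \<phi> (g x) \<partial>M)
     \<le> 2 * C * (sf powr (- q) + sg powr (- q)) * (h / 4) powr q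
       + max 1 (1 / h) * fm_dist (distr M borel f) (distr M borel g)"
proof -
  have "\<bar>\<phi> x\<bar> \<le> 1" for x
    using abs_le_sup_norm[OF Cb_inf_bounded[OF \<phi>(1)], of x] \<phi>(2) by linarith
  then obtain \<phi>\<^sub>h \<eta> where \<phi>\<^sub>h: "\<phi>\<^sub>h \<in> Cb_inf" "\<And>x. \<bar>\<phi>\<^sub>h x\<bar> \<le> 1" "\<And>x. \<bar>deriv \<phi>\<^sub>h x\<bar> \<le> 1 / h"
    and \<eta>: "\<eta> \<in> Cb_inf" "\<And>x. \<bar>\<eta> x\<bar> \<le> h / 2" "\<And>x. deriv \<eta> x = \<phi> x - \<phi>\<^sub>h x"
      "\<And>x. \<bar>deriv \<eta> x\<bar> \<le> 2"
    using Cb_inf_smoothing_decomposition[OF \<phi>(1) _ h] by metis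
  have h2: "0 < h / 2" using h by simp
  have \<eta>_f: "\<bar>\<integral>x. deriv \<eta> (f x) \<partial>M\<bar> \<le> 2 * C * sf powr (- q) * (h / 4) powr q"
    using abs_integral_deriv_le_derivative_test_bound[OF Hf C sf q \<eta>(1,2,4) h2]
    unfolding rescaled_bound_eq[OF h sf] .
  have \<eta>_g: "\<bar>\<integral>x. deriv \<eta> (g x) \<partial>M\<bar> \<le> 2 * C * sg powr (- q) * (h / 4) powr q"
    using abs_integral_deriv_le_derivative_test_bound[OF Hg C sg q \<eta>(1,2,4) h2]
    unfolding rescaled_bound_eq[OF h sg] .
  have \<phi>\<^sub>h_fg: "(\<integral>x. \<phi>\<^sub>h (f x) \<partial>M) - (\<integral>x. \<phi>\<^sub>h (g x) \<partial>M)
      \<le> max 1 (1 / h) * fm_dist (distr M borel f) (distr M borel g)"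
    using \<phi>\<^sub>h by (intro integral_diff_le_fm_dist[OF M f g \<phi>\<^sub>h(1)])
      (auto intro: max.coboundedI1 max.coboundedI2)
  have split: "(\<integral>x. \<phi> (k x) \<partial>M) = (\<integral>x. deriv \<eta> (k x) \<partial>M) + (\<integral>x. \<phi>\<^sub>h (k x) \<partial>M)"
    if "k \<in> borel_measurable M" for k
    using Bochner_Integration.integral_diff[OF integrable_Cb_inf_comp[OF M that \<phi>(1)]
        integrable_Cb_inf_comp[OF M that \<phi>\<^sub>h(1)]]
    by (simp add: \<eta>(3))
  have "2 * C * (sf powr (- q) + sg powr (- q)) * (h / 4) powr q
      = 2 * C * sf powr (- q) * (h / 4) powr q + 2 * C * sg powr (- q) * (h / 4) powr q"
    by (simp add: algebra_simps)
  then show ?thesis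
    using split[OF f] split[OF g] abs_le_D1[OF \<eta>_f] abs_le_D2[OF \<eta>_g] \<phi>\<^sub>h_fg by linarith
qed

lemma nonpos_if_le_powr_of_small:
  fixes L K q :: real
  assumes K: "0 \<le> K" and q: "0 < q" and H: "\<And>e. 0 < e \<Longrightarrow> L \<le> K * e powr q"
  shows "L \<le> 0"
proof (rule ccontr)
  assume "\<not> L \<le> 0"
  define t where "t = L / (2 * (K + 1))"
  have t: "0 < t" using \<open>\<not> L \<le> 0\<close> K by (simp add: t_def)
  have "L \<le> K * t"
    using H[of "t powr (1 / q)"] t q by (simp add: powr_powr)
  moreover have "K * t < L"
    using \<open>\<not> L \<le> 0\<close> K by (simp add: t_def field_simps) (intro add_nonneg_pos; simp)
  ultimately show False by simp
qed

lemma smoothing_tradeoff: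
  fixes T F K M :: real and d :: nat
  assumes d: "1 \<le> d" and F: "0 \<le> F" and K: "0 \<le> K" and M: "8 powr (- 1 / real d) \<le> M"
    and T2: "T \<le> 2"
    and Th: "\<And>h. 0 < h \<Longrightarrow> T \<le> K * (h / 4) powr (1 / real d) + max 1 (1 / h) * F"
  shows "T \<le> (2 + K * M) * F powr (1 / (1 + real d))"
proof -
  define q where "q = 1 / real d"
  define t where "t = F powr (1 / (1 + real d))"
  have q: "0 < q" "real d * q = 1" using d by (simp_all add: q_def)
  have KM: "0 \<le> K * M"
    using K M powr_gt_zero[of 8 "- 1 / real d"] by (intro mult_nonneg_nonneg) linarith+
  consider "1 \<le> F" | "F = 0" | "0 < F" "F < 1" using F by linarith
  then show ?thesis
  proof cases
    case 1
    then have "1 \<le> t" by (simp add: t_def ge_one_powr_ge_zero)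
    then have "2 * 1 \<le> (2 + K * M) * t" using KM by (intro mult_mono) auto
    then show ?thesis using T2 by (simp add: t_def)
  next
    case 2
    have "T \<le> 0"
    proof (rule nonpos_if_le_powr_of_small[OF K q(1)])
      fix e :: real assume "0 < e"
      then show "T \<le> K * e powr q" using Th[of "4 * e"] 2 by (simp add: q_def)
    qed
    then show ?thesis using 2 by simp
  next
    case 3
    have t: "0 < t" "t < 1"
      using 3 powr_less_mono2[of "1 / (1 + real d)" F 1] by (simp_all add: t_def)
    text \<open>This choice of \<open>h\<close> makes both error terms multiples of \<open>t = F\<^sup>1\<^sup>/\<^sup>(\<^sup>d\<^sup>+\<^sup>1\<^sup>)\<close>.\<close>
    define h where "h = t ^ d / 2"
    have h: "0 < h" "1 \<le> 1 / h"
      using t power_le_one[of t d] by (simp_all add: h_def field_simps)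
    have "F = t ^ (d + 1)"
    proof -
      have "t ^ (d + 1) = t powr real (d + 1)" by (rule powr_realpow[OF t(1), symmetric])
      also have "\<dots> = F powr (1 / (1 + real d) * real (d + 1))" unfolding t_def by (rule powr_powr)
      also have "1 / (1 + real d) * real (d + 1) = 1" by (simp add: field_simps)
      finally show ?thesis using 3 by simp
    qed
    then have "1 / h * F = 2 * t" using t by (simp add: h_def field_simps)
    moreover have "(h / 4) powr q = t * 8 powr (- q)"
    proof -
      have "(t ^ d) powr q = t powr (real d * q)"
        using t by (simp add: powr_realpow[symmetric] powr_powr)
      then have "(t ^ d) powr q = t" using q t by simp
      then show ?thesis
        by (simp add: h_def powr_divide powr_minus_divide)
    qed
    ultimately have "T \<le> K * 8 powr (- q) * t + 2 * t"
      using Th[OF h(1)] h(2) by (simp add: q_def max_def mult_ac)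
    also have "\<dots> \<le> K * M * t + 2 * t"
      using M K t by (simp add: q_def mult_left_mono mult_right_mono)
    finally show ?thesis by (simp add: t_def algebra_simps)
  qed
qed

subsection \<open>A Gaussian moment\<close>

lemma powr_neg_le_secant:
  fixes a q :: real assumes "0 < a" "0 \<le> q" "q \<le> 1"
  shows "a powr (- q) \<le> 1 - (1 - 1 / a) * q"
proof -
  have "exp ((1 - q) *\<^sub>R 0 + q *\<^sub>R (- ln a)) \<le> (1 - q) * exp 0 + q * exp (- ln a)"
    using convex_onD[OF exp_convex, of q 0 "- ln a"] assms by simp
  moreover have "exp (- ln a) = 1 / a" using assms by (simp add: exp_minus inverse_eq_divide)
  moreover have "a powr (- q) = exp ((1 - q) *\<^sub>R 0 + q *\<^sub>R (- ln a))"
    using assms by (simp add: powr_def)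
  ultimately show ?thesis by (simp add: algebra_simps)
qed

lemma has_bochner_integral_tent_powr:
  fixes q :: real assumes q: "0 < q"
  shows "has_bochner_integral lborel (\<lambda>x. indicator {-1..1} x * (1 - \<bar>x\<bar> powr q)) (2 * (q / (q + 1)))"
proof -
  have cont: "continuous_on {0..1} (\<lambda>x::real. 1 - x powr q)"
    by (intro continuous_intros continuous_on_powr') (use q in auto)
  have int: "set_integrable lborel {0..1} (\<lambda>x::real. 1 - x powr q)"
    by (rule borel_integrable_atLeastAtMost'[OF cont])
  have "((\<lambda>x::real. x powr q) has_integral 1 / (q + 1)) {0..1}"
    using has_integral_powr_from_0[of q 1] q by simp
  from has_integral_diff[OF has_integral_const_real[of 1 0 1] this]
  have "((\<lambda>x::real. 1 - x powr q) has_integral q / (q + 1)) {0..1}"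
    using q by (simp add: field_simps)
  then have "(LINT x:{0..1}|lborel. 1 - x powr q) = q / (q + 1)"
    using set_borel_integral_eq_integral(2)[OF int] by (simp add: integral_unique)
  moreover have "(\<lambda>x. indicator {0..} x *\<^sub>R (indicator {-1..1} x * (1 - \<bar>x\<bar> powr q)))
      = (\<lambda>x::real. indicator {0..1} x *\<^sub>R (1 - x powr q))"
    by (auto simp: fun_eq_iff split: split_indicator)
  ultimately have "has_bochner_integral lborel
      (\<lambda>x. indicator {0..} x *\<^sub>R (indicator {-1..1} x * (1 - \<bar>x\<bar> powr q))) (q / (q + 1))"
    using int by (simp add: set_integrable_def set_lebesgue_integral_def has_bochner_integral_iff)
  then have "has_bochner_integral lborel (\<lambda>x. indicator {-1..1} x * (1 - \<bar>x\<bar> powr q))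
      (2 *\<^sub>R (q / (q + 1)))"
    by (rule has_bochner_integral_even_function) (auto simp: indicator_def)
  then show ?thesis by simp
qed

lemma integrable_std_normal_density_abs_powr:
  fixes q :: real assumes q: "0 < q" "q \<le> 1"
  shows "integrable lborel (\<lambda>t. std_normal_density t * \<bar>t\<bar> powr q)"
proof (rule Bochner_Integration.integrable_bound)
  show "integrable lborel (\<lambda>t. std_normal_density t * \<bar>t\<bar> ^ 0 + std_normal_density t * \<bar>t\<bar> ^ 1)"
    by (intro Bochner_Integration.integrable_add integrable_std_normal_moment_abs)
  have "\<bar>t\<bar> powr q \<le> 1 + \<bar>t\<bar>" for t :: real
  proof (cases "\<bar>t\<bar> \<le> 1")
    case True
    then show ?thesis using powr_mono2[of q "\<bar>t\<bar>" 1] q by simp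
  next
    case False
    then show ?thesis using powr_mono[of q 1 "\<bar>t\<bar>"] q by simp
  qed
  then have "std_normal_density t * \<bar>t\<bar> powr q \<le> std_normal_density t * (1 + \<bar>t\<bar>)" for t
    by (intro mult_left_mono) simp_all
  then show "AE t in lborel. norm (std_normal_density t * \<bar>t\<bar> powr q)
      \<le> norm (std_normal_density t * \<bar>t\<bar> ^ 0 + std_normal_density t * \<bar>t\<bar> ^ 1)"
    by (intro AE_I2) (simp add: algebra_simps)
qed measurable

text \<open>Since the standard normal density is at most \<open>1/\<surd>(2\<pi>) \<le> 7/16\<close> and \<open>|t|\<^sup>q \<ge> 1 - \<tau>(t)\<close>
  for the tent \<open>\<tau>(t) = (1 - |t|\<^sup>q)\<^sub>+\<close> of mass \<open>2q/(q + 1) \<le> 2q\<close>, the moment is at least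
  \<open>1 - 7q/8\<close>, which dominates \<open>8\<^sup>-\<^sup>q\<close> by convexity.\<close>
lemma gaussian_abs_powr_moment_ge:
  fixes q :: real assumes q: "0 < q" "q \<le> 1"
  shows "8 powr (- q) \<le> (2 * pi) powr (- 1 / 2) * (\<integral>t. exp (- t\<^sup>2 / 2) * \<bar>t\<bar> powr q \<partial>lborel)"
proof -
  define c where "c = (2 * pi) powr (- 1 / 2)"
  define \<tau> where "\<tau> t = indicator {-1..1} t * (1 - \<bar>t\<bar> powr q)" for t :: real
  have std: "std_normal_density t = c * exp (- t\<^sup>2 / 2)" for t
    by (simp add: std_normal_density_def c_def powr_minus_divide powr_half_sqrt)
  have "16 / 7 \<le> sqrt (6::real)" by (rule real_le_rsqrt) (simp add: power2_eq_square)
  also have "\<dots> \<le> sqrt (2 * pi)" using pi_gt3 by simp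
  finally have c: "0 < c" "c \<le> 7 / 16"
    by (simp_all add: c_def powr_minus_divide powr_half_sqrt divide_le_eq)
  have \<tau>: "has_bochner_integral lborel \<tau> (2 * (q / (q + 1)))"
    unfolding \<tau>_def by (rule has_bochner_integral_tent_powr[OF q(1)])
  have pointwise: "std_normal_density t - c * \<tau> t \<le> std_normal_density t * \<bar>t\<bar> powr q" for t
  proof (cases "\<bar>t\<bar> \<le> 1")
    case True
    then have "0 \<le> 1 - \<bar>t\<bar> powr q" using powr_mono2[of q "\<bar>t\<bar>" 1] q by simp
    moreover have "std_normal_density t \<le> c" using c by (simp add: std mult_le_cancel_left1)
    moreover have "t \<in> {-1..1}" using True by auto
    ultimately show ?thesis
      using mult_right_mono[of "std_normal_density t" c "1 - \<bar>t\<bar> powr q"]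
      by (simp add: \<tau>_def algebra_simps)
  next
    case False
    then have "\<tau> t = 0" by (auto simp: \<tau>_def indicator_def)
    with False show ?thesis
      using ge_one_powr_ge_zero[of "\<bar>t\<bar>" q] q mult_left_mono[of 1 "\<bar>t\<bar> powr q" "std_normal_density t"]
      by (simp add: \<tau>_def)
  qed
  have "1 - c * (2 * (q / (q + 1))) = (\<integral>t. std_normal_density t - c * \<tau> t \<partial>lborel)"
    using \<tau> by (simp add: has_bochner_integral_iff)
  also have "\<dots> \<le> (\<integral>t. std_normal_density t * \<bar>t\<bar> powr q \<partial>lborel)"
    using \<tau> pointwise integrable_std_normal_density_abs_powr[OF q]
    by (intro integral_mono Bochner_Integration.integrable_diff integrable_normal_density
        integrable_mult_right) (auto simp: has_bochner_integral_iff)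
  also have "\<dots> = c * (\<integral>t. exp (- t\<^sup>2 / 2) * \<bar>t\<bar> powr q \<partial>lborel)"
    by (simp add: std mult.assoc)
  finally have "1 - c * (2 * (q / (q + 1))) \<le> c * (\<integral>t. exp (- t\<^sup>2 / 2) * \<bar>t\<bar> powr q \<partial>lborel)" .
  moreover have "c * (2 * (q / (q + 1))) \<le> 7 / 16 * (2 * q)"
    using c q by (intro mult_mono) (auto simp: field_simps)
  ultimately show ?thesis
    using powr_neg_le_secant[of 8 q] q by (simp add: c_def)
qed

theorem corollary5p3:
  fixes d :: nat and C :: real and \<mu> :: "'a::{real_vector,t2_space} measure"
    and f g :: "'a \<Rightarrow> real"
  assumes lcs: "locally_convex_space TYPE('a)"
    and d: "d \<ge> 1"
    and C: "\<And>\<mu>' :: 'a measure. \<And>h \<phi>. prob_space \<mu>' \<Longrightarrow> radon_measure \<mu>' \<Longrightarrow> log_concave \<mu>' \<Longrightarrow>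
              h \<in> Pd d \<mu>' \<Longrightarrow> \<phi> \<in> Cb_inf \<Longrightarrow> sup_norm \<phi> \<le> 1 \<Longrightarrow>
              sigma \<mu>' h powr (1 / real d) * (\<integral>x. deriv \<phi> (h x) \<partial>\<mu>')
                \<le> C * sup_norm (deriv \<phi>) powr (1 - 1 / real d)"
    and \<mu>: "prob_space \<mu>" "radon_measure \<mu>" "log_concave \<mu>"
    and f: "f \<in> Pd d \<mu>" "\<not> (\<exists>c. AE x in \<mu>. f x = c)"
    and g: "g \<in> Pd d \<mu>" "\<not> (\<exists>c. AE x in \<mu>. g x = c)"
  shows "tv_dist (distr \<mu> borel f) (distr \<mu> borel g)
           \<le> Cd_const d C (sigma \<mu> f) (sigma \<mu> g) *
             fm_dist (distr \<mu> borel f) (distr \<mu> borel g) powr (1 / (1 + real d))"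
proof -
  define q where "q = 1 / real d"
  have q: "0 < q" "q \<le> 1" using d by (simp_all add: q_def)
  have fm: "f \<in> borel_measurable \<mu>" and gm: "g \<in> borel_measurable \<mu>"
    and sf: "0 < sigma \<mu> f" and sg: "0 < sigma \<mu> g"
    using Pd_memD[OF f(1)] Pd_memD[OF g(1)] sigma_pos[OF \<mu>(1) _ _ f(2)] sigma_pos[OF \<mu>(1) _ _ g(2)]
    by auto
  have Hf: "derivative_test_bound \<mu> f (sigma \<mu> f) q C"
    and Hg: "derivative_test_bound \<mu> g (sigma \<mu> g) q C"
    using C[OF \<mu> f(1)] C[OF \<mu> g(1)] by (auto simp: derivative_test_bound_def q_def)
  have C0: "0 \<le> C" by (rule derivative_test_bound_imp_nonneg[OF Hf sf])
  define K where "K = 2 * C * (sigma \<mu> f powr (- q) + sigma \<mu> g powr (- q))"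
  define M where "M = (2 * pi) powr (- 1 / 2) * (\<integral>t. exp (- t\<^sup>2 / 2) * \<bar>t\<bar> powr q \<partial>lborel)"
  have "Cd_const d C (sigma \<mu> f) (sigma \<mu> g) = 2 + K * M"
    by (simp add: Cd_const_def K_def M_def q_def mult_ac)
  moreover have "tv_dist (distr \<mu> borel f) (distr \<mu> borel g)
      \<le> (2 + K * M) * fm_dist (distr \<mu> borel f) (distr \<mu> borel g) powr (1 / (1 + real d))"
  proof (rule tv_dist_le[OF fm gm])
    fix \<phi> assume \<phi>: "\<phi> \<in> Cb_inf" "sup_norm \<phi> \<le> 1"
    show "(\<integral>x. \<phi> (f x) \<partial>\<mu>) - (\<integral>x. \<phi> (g x) \<partial>\<mu>)
        \<le> (2 + K * M) * fm_dist (distr \<mu> borel f) (distr \<mu> borel g) powr (1 / (1 + real d))"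
    proof (rule smoothing_tradeoff[OF d fm_dist_nonneg[OF \<mu>(1) fm gm]])
      show "0 \<le> K" using C0 by (simp add: K_def)
      show "8 powr (- 1 / real d) \<le> M"
        using gaussian_abs_powr_moment_ge[OF q] by (simp add: M_def q_def)
      show "(\<integral>x. \<phi> (f x) \<partial>\<mu>) - (\<integral>x. \<phi> (g x) \<partial>\<mu>) \<le> 2"
        using abs_integral_Cb_inf_comp_le[OF \<mu>(1) fm \<phi>(1)] abs_integral_Cb_inf_comp_le[OF \<mu>(1) gm \<phi>(1)] \<phi>(2)
        by linarith
      show "(\<integral>x. \<phi> (f x) \<partial>\<mu>) - (\<integral>x. \<phi> (g x) \<partial>\<mu>) \<le> K * (h / 4) powr (1 / real d)
          + max 1 (1 / h) * fm_dist (distr \<mu> borel f) (distr \<mu> borel g)" if "0 < h" for h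
        using smoothed_difference_bound[OF \<mu>(1) fm gm Hf Hg C0 sf sg q(2) \<phi> that]
        by (simp add: K_def q_def)
    qed
  qed
  ultimately show ?thesis by simp
qed

end
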